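(* Let $(k,\alpha)\in\Upsilon$, $w\in\operatorname{rext}(L_{k,\alpha})$, $\bar w\in\operatorname{rext}(w,L_{k,\alpha})$, let $x\in\Sigma_k$ be a letter that is a recurrent factor of $\bar w$, and let $t\in L^{\mathbb N,R}_{k,\alpha}$ with $\operatorname{occur}(t,x)=0$. Then there are finite words $w_1,w_2,g\in\Sigma_k^*$ such that $(w_1,w_2,x,g,t)\in\Gamma(k,\alpha)$ and $w$ is a prefix of $w_1w_2xg$.
   Context: $\Sigma_k$ is an alphabet with $k$ letters. For a nonempty finite word $r$ and a rational $\beta\ge 1$ with $\beta|r|$ an integer, the $\beta$-power $r^\beta$ is the word $rr\cdots rt$ of length $\beta|r|$, where $t$ is a prefix of $r$. For rational $\alpha\ge1$, a word is $\alpha$-power free if it has no factor that is a $\beta$-power with $\beta\ge\alpha$, and $\alpha^+$-power free if it has no factor that is a $\beta$-power with $\beta>\alpha$; "$\alpha$" may denote a rational number or a symbol $\alpha^+$. $L_{k,\alpha}$ is the set of finite $\alpha$-power free words over $\Sigma_k$, and $L^{\mathbb N,R}_{k,\alpha}$ the set of right infinite words over $\Sigma_k$ all of whose finite factors lie in $L_{k,\alpha}$. $\Upsilon$ is the set of pairs: $(k,\alpha)$ with $k=3$ and rational $\alpha>2$; $(k,\alpha)$ with $k>3$ and rational $\alpha\ge2$; $(k,\alpha^+)$ with $k\ge3$ and rational $\alpha\ge2$. $\operatorname{occur}(w,s)$ is the number of occurrences of a nonempty word $s$ as a factor of $w$; $s$ is recurrent in an infinite word $w$ if $\operatorname{occur}(w,s)=\infty$.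 Prefixes include the empty word and the word itself if finite. A word $w\in L$ is right extendable in $L$ if for every $n\in\mathbb N$ there is $u\in L$ with $|u|=n$ and $wu\in L$; $\operatorname{rext}(L)$ is the set of such words, and for $w\in\operatorname{rext}(L)$, $\operatorname{rext}(w,L)$ is the set of right infinite words all of whose finite prefixes lie in $L$ and which have $w$ as a prefix. For $(k,\alpha)\in\Upsilon$, $(w_1,w_2,x,g,t)\in\Gamma(k,\alpha)$ means: $w_1,w_2,g\in\Sigma_k^*$; $x\in\Sigma_k$; $w_1w_2xg\in L_{k,\alpha}$; $t\in L^{\mathbb N,R}_{k,\alpha}$; $\operatorname{occur}(t,x)=0$; $g$ is a prefix of $t$; $\operatorname{occur}(w_2xgy,xgy)=1$, where $y\in\Sigma_k$ is the letter with $gy$ a prefix of $t$; and $\operatorname{occur}(w_2,x)\ge\operatorname{occur}(w_1,x)$. *)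

theory Defs
  imports Main "HOL-Library.Extended_Nat" "HOL-Library.Sublist"
begin

text \<open>Letters of the alphabet Sigma_k are the naturals 0,...,k-1; finite words are lists,
right infinite words are functions nat => nat.\<close>

definition Sigma :: "nat \<Rightarrow> nat set" where
  "Sigma k = {0..<k}"

text \<open>An exponent bound: either a rational alpha, or the symbol alpha+.\<close>
datatype pexp = Exact rat | Plus rat

definition is_power :: "nat list \<Rightarrow> rat \<Rightarrow> bool" where
  "is_power u \<beta> \<longleftrightarrow> \<beta> \<ge> 1 \<and> (\<exists>r t n. r \<noteq> [] \<and> n \<ge> 1 \<and> prefix t r \<and>
      u = concat (replicate n r) @ t \<and> of_nat (length u) = \<beta> * of_nat (length r))"

definition exceeds :: "pexp \<Rightarrow> rat \<Rightarrow> bool" where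
  "exceeds a \<beta> = (case a of Exact \<alpha> \<Rightarrow> \<beta> \<ge> \<alpha> | Plus \<alpha> \<Rightarrow> \<beta> > \<alpha>)"

definition power_free :: "pexp \<Rightarrow> nat list \<Rightarrow> bool" where
  "power_free a w \<longleftrightarrow> \<not> (\<exists>u \<beta>. sublist u w \<and> is_power u \<beta> \<and> exceeds a \<beta>)"

definition Lfin :: "nat \<Rightarrow> pexp \<Rightarrow> nat list set" where
  "Lfin k a = {w. set w \<subseteq> Sigma k \<and> power_free a w}"

definition Linf :: "nat \<Rightarrow> pexp \<Rightarrow> (nat \<Rightarrow> nat) set" where
  "Linf k a = {t. (\<forall>i. t i \<in> Sigma k) \<and> (\<forall>i j. map t [i..<j] \<in> Lfin k a)}"

definition Upsilon :: "(nat \<times> pexp) set" where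
  "Upsilon = {(k, a). (k = 3 \<and> (\<exists>\<alpha>. a = Exact \<alpha> \<and> \<alpha> > 2))
                    \<or> (k > 3 \<and> (\<exists>\<alpha>. a = Exact \<alpha> \<and> \<alpha> \<ge> 2))
                    \<or> (k \<ge> 3 \<and> (\<exists>\<alpha>. a = Plus \<alpha> \<and> \<alpha> \<ge> 2))}"

definition occur :: "nat list \<Rightarrow> nat list \<Rightarrow> nat" where
  "occur w s = card {i. i + length s \<le> length w \<and> take (length s) (drop i w) = s}"

definition occur_inf :: "(nat \<Rightarrow> nat) \<Rightarrow> nat list \<Rightarrow> enat" where
  "occur_inf t s = (let S = {i. map t [i..<i + length s] = s} in
                     if finite S then enat (card S) else \<infinity>)"

definition recurrent :: "(nat \<Rightarrow> nat) \<Rightarrow> nat list \<Rightarrow> bool" where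
  "recurrent t s \<longleftrightarrow> s \<noteq> [] \<and> occur_inf t s = \<infinity>"

definition inf_prefix :: "nat list \<Rightarrow> (nat \<Rightarrow> nat) \<Rightarrow> bool" where
  "inf_prefix u t \<longleftrightarrow> map t [0..<length u] = u"

definition rext :: "nat list set \<Rightarrow> nat list set" where
  "rext L = {w. w \<in> L \<and> (\<forall>n. \<exists>u\<in>L. length u = n \<and> w @ u \<in> L)}"

definition rext_inf :: "nat list \<Rightarrow> nat list set \<Rightarrow> (nat \<Rightarrow> nat) set" where
  "rext_inf w L = {t. (\<forall>n. map t [0..<n] \<in> L) \<and> inf_prefix w t}"

definition Gamma :: "nat \<Rightarrow> pexp \<Rightarrow> (nat list \<times> nat list \<times> nat \<times> nat list \<times> (nat \<Rightarrow> nat)) set" where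
  "Gamma k a = {(w1, w2, x, g, t).
      set w1 \<subseteq> Sigma k \<and> set w2 \<subseteq> Sigma k \<and> set g \<subseteq> Sigma k \<and> x \<in> Sigma k \<and>
      w1 @ w2 @ [x] @ g \<in> Lfin k a \<and> t \<in> Linf k a \<and> occur_inf t [x] = 0 \<and>
      inf_prefix g t \<and>
      (let y = t (length g) in occur (w2 @ [x] @ g @ [y]) (x # g @ [y]) = 1) \<and>
      occur w2 [x] \<ge> occur w1 [x]}"

end

theory Submission
  imports Defs
begin

text \<open>Let P l be the set of positions at which x t(0) ... t(l-1) occurs in wbar. These sets
  decrease in l, and P 0 is infinite because x is recurrent. If all of them are infinite, cut
  wbar at the first occurrence of x t(0) ... t(|w|) and take w1 empty. Otherwise P j is infinite
  and P (j+1) finite for some j; pick an occurrence of x t(0) ... t(j-1) so late that there are at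
  least as many x's between a bound N above P (j+1) and it as before N, and let w1 be the
  prefix of length N. In both cases g = t(0) ... t(j-1), and x g y occurs in w2 x g y only at its
  end.\<close>

definition factor_positions :: "(nat \<Rightarrow> 'a) \<Rightarrow> 'a list \<Rightarrow> nat set" where
  "factor_positions f s = {i. map f [i..<i + length s] = s}"

lemma recurrent_iff_infinite_factor_positions:
  "recurrent f s \<longleftrightarrow> s \<noteq> [] \<and> infinite (factor_positions f s)"
  unfolding recurrent_def occur_inf_def factor_positions_def by (simp add: Let_def)

lemma factor_positions_prefix_subset:
  assumes "prefix s s'"
  shows "factor_positions f s' \<subseteq> factor_positions f s"
proof
  fix i assume "i \<in> factor_positions f s'"
  then have "take (length s) (map f [i..<i + length s']) = take (length s) s'"
    by (simp add: factor_positions_def)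
  moreover obtain zs where "s' = s @ zs" using assms by (auto simp: prefix_def)
  ultimately show "i \<in> factor_positions f s"
    by (simp add: factor_positions_def take_map)
qed

lemma occur_map_upt:
  assumes "a \<le> b"
  shows "occur (map f [a..<b]) s = card {i \<in> factor_positions f s. a \<le> i \<and> i + length s \<le> b}"
proof -
  let ?S = "{i \<in> factor_positions f s. a \<le> i \<and> i + length s \<le> b}"
  have "{i. i + length s \<le> length (map f [a..<b]) \<and> take (length s) (drop i (map f [a..<b])) = s}
        = (\<lambda>i. i - a) ` ?S"
  proof (rule set_eqI, rule iffI)
    fix i assume "i \<in> {i. i + length s \<le> length (map f [a..<b]) \<and> take (length s) (drop i (map f [a..<b])) = s}"
    then have "a + i + length s \<le> b" and "map f (take (length s) [a + i..<b]) = s"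
      using assms by (auto simp: take_map drop_map)
    then have "a + i + length s \<le> b" "map f [a + i..<a + i + length s] = s"
      by simp_all
    then have "a + i \<in> ?S" by (simp add: factor_positions_def)
    then show "i \<in> (\<lambda>i. i - a) ` ?S" by (rule rev_image_eqI) simp
  qed (auto simp: factor_positions_def take_map drop_map take_upt)
  moreover have "inj_on (\<lambda>i. i - a) ?S" by (auto simp: inj_on_def)
  ultimately show ?thesis unfolding occur_def by (simp add: card_image)
qed

lemma ex_infinite_before_finite:
  assumes "infinite (P 0)" and "finite (P l)"
  shows "\<exists>j. infinite (P j) \<and> finite (P (Suc j))"
  using assms(2)
proof (induction l)
  case 0
  then show ?case using assms(1) by simp
next
  case (Suc l)
  then show ?case by blast
qed

lemma gap_after_finite_level:
  fixes P :: "nat \<Rightarrow> nat set"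
  assumes "infinite (P j)" and "finite (P (Suc j))" and "P j \<subseteq> Q"
  shows "\<exists>m p. m \<le> p \<and> M \<le> p \<and> p \<in> P j \<and> P (Suc j) \<inter> {m..<p} = {} \<and>
           card (Q \<inter> {..<m}) \<le> card (Q \<inter> {m..<p})"
proof -
  obtain N where N: "P (Suc j) \<subseteq> {..<N}" using finite_nat_bounded assms(2) by blast
  have "infinite (P j - {..<max N M})" using assms(1) by simp
  then obtain B where B: "finite B" "card B = Suc (card (Q \<inter> {..<N}))"
    and B_sub: "B \<subseteq> P j - {..<max N M}"
    using infinite_arbitrarily_large by blast
  define p where "p = Max B"
  have "B \<noteq> {}" using B by auto
  then have p: "p \<in> B" "\<And>i. i \<in> B \<Longrightarrow> i \<le> p" using B(1) by (simp_all add: p_def)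
  have "B - {p} \<subseteq> Q \<inter> {N..<p}"
  proof
    fix i assume "i \<in> B - {p}"
    then have "i \<in> P j" "N \<le> i" "i < p" using B_sub p(2)[of i] by fastforce+
    then show "i \<in> Q \<inter> {N..<p}" using assms(3) by auto
  qed
  then have "card (B - {p}) \<le> card (Q \<inter> {N..<p})" by (intro card_mono) simp_all
  then have "card (Q \<inter> {..<N}) \<le> card (Q \<inter> {N..<p})" using B p(1) by simp
  moreover have "N \<le> p" "M \<le> p" "p \<in> P j" using B_sub p(1) by auto
  moreover have "P (Suc j) \<inter> {N..<p} = {}" using N by auto
  ultimately show ?thesis by (intro exI[of _ N] exI[of _ p]) simp
qed

lemma decreasing_chain_gap:
  fixes P :: "nat \<Rightarrow> nat set"
  assumes "infinite (P 0)" and "\<And>l. P (Suc l) \<subseteq> P l"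
  shows "\<exists>j m p. m \<le> p \<and> M \<le> p + j \<and> p \<in> P j \<and> P (Suc j) \<inter> {m..<p} = {} \<and>
           card (P 0 \<inter> {..<m}) \<le> card (P 0 \<inter> {m..<p})"
proof (cases "\<exists>l. finite (P l)")
  case True
  then obtain j where "infinite (P j)" "finite (P (Suc j))"
    using ex_infinite_before_finite assms(1) by blast
  moreover have "P j \<subseteq> P 0" using lift_Suc_antimono_le[of P 0 j] assms(2) by simp
  ultimately obtain m p where "m \<le> p" "M \<le> p" "p \<in> P j" "P (Suc j) \<inter> {m..<p} = {}"
      "card (P 0 \<inter> {..<m}) \<le> card (P 0 \<inter> {m..<p})"
    using gap_after_finite_level[of P j "P 0" M] by blast
  then show ?thesis by (intro exI[of _ j] exI[of _ m] exI[of _ p]) simp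
next
  case False
  define p where "p = (LEAST p. p \<in> P (Suc M))"
  have "infinite (P (Suc M))" using False by blast
  then obtain q where "q \<in> P (Suc M)" by (metis finite.emptyI equals0I)
  then have "p \<in> P (Suc M)" unfolding p_def by (rule LeastI)
  then have "p \<in> P M" using assms(2) by blast
  moreover have "P (Suc M) \<inter> {0..<p} = {}"
    unfolding p_def using not_less_Least by fastforce
  ultimately show ?thesis by (intro exI[of _ M] exI[of _ 0] exI[of _ p]) simp
qed

lemma map_upt_split: "a \<le> b \<Longrightarrow> b \<le> c \<Longrightarrow> map f [a..<c] = map f [a..<b] @ map f [b..<c]"
  by (metis le_add_diff_inverse map_append upt_add_eq_append)

lemma factor_positions_fun_upd_beyond:
  "i + length s \<le> n \<Longrightarrow> i \<in> factor_positions (f(n := v)) s \<longleftrightarrow> i \<in> factor_positions f s"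
  by (simp add: factor_positions_def)

lemma occur_single_map_upt:
  "occur (map f [a..<b]) [x] = card (factor_positions f [x] \<inter> {a..<b})"
proof (cases "a \<le> b")
  case True
  then show ?thesis by (simp add: occur_map_upt Int_def Suc_le_eq conj_commute)
next
  case False
  then show ?thesis by (simp add: occur_def)
qed

lemma occur_unique_at_gap_end:
  assumes occ: "p \<in> factor_positions f (x # map t [0..<j])"
    and gap: "factor_positions f (x # map t [0..<Suc j]) \<inter> {m..<p} = {}" and "m \<le> p"
  shows "occur (map f [m..<p] @ [x] @ map t [0..<j] @ [t j]) (x # map t [0..<j] @ [t j]) = 1"
proof -
  define s where "s = x # map t [0..<Suc j]"
  \<comment> \<open>the appended letter \<open>t j\<close> is written into \<open>f\<close> just past the window\<close>
  define f' where "f' = f(p + Suc j := t j)"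
  have window: "map f [p..<p + Suc j] = x # map t [0..<j]"
    using occ by (simp add: factor_positions_def)
  have "map f' [m..<p + Suc (Suc j)] = map f [m..<p + Suc j] @ [t j]"
    using \<open>m \<le> p\<close> by (simp add: f'_def)
  also have "\<dots> = map f [m..<p] @ [x] @ map t [0..<j] @ [t j]"
    using window map_upt_split[of m p "p + Suc j" f] \<open>m \<le> p\<close> by (simp del: upt_Suc)
  finally have word: "map f [m..<p] @ [x] @ map t [0..<j] @ [t j] = map f' [m..<p + Suc (Suc j)]" ..
  have "{i \<in> factor_positions f' s. m \<le> i \<and> i + length s \<le> p + Suc (Suc j)} = {p}"
  proof (intro set_eqI iffI)
    fix i assume i: "i \<in> {i \<in> factor_positions f' s. m \<le> i \<and> i + length s \<le> p + Suc (Suc j)}"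
    show "i \<in> {p}"
    proof (rule ccontr)
      assume "i \<notin> {p}"
      with i have "i < p" by (simp add: s_def)
      with i have "i \<in> factor_positions f s \<inter> {m..<p}"
        using factor_positions_fun_upd_beyond[of i s "p + Suc j" f "t j"] by (simp add: f'_def s_def)
      with gap show False by (simp add: s_def)
    qed
  next
    fix i assume "i \<in> {p}"
    moreover have "map f' [p..<p + Suc (Suc j)] = s"
      using window by (simp add: f'_def s_def)
    ultimately show "i \<in> {i \<in> factor_positions f' s. m \<le> i \<and> i + length s \<le> p + Suc (Suc j)}"
      using \<open>m \<le> p\<close> by (simp add: factor_positions_def s_def)
  qed
  moreover have "x # map t [0..<j] @ [t j] = s" by (simp add: s_def)
  ultimately show ?thesis
    unfolding word using occur_map_upt[of m "p + Suc (Suc j)" f' s] \<open>m \<le> p\<close> by simp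
qed

lemma Gamma_witness:
  assumes wbar: "wbar \<in> rext_inf w (Lfin k a)" and x: "x \<in> Sigma k"
    and t: "t \<in> Linf k a" and tx: "occur_inf t [x] = 0" and "m \<le> p"
    and occ: "p \<in> factor_positions wbar (x # map t [0..<j])"
    and gap: "factor_positions wbar (x # map t [0..<Suc j]) \<inter> {m..<p} = {}"
    and count: "card (factor_positions wbar [x] \<inter> {..<m}) \<le> card (factor_positions wbar [x] \<inter> {m..<p})"
    and long: "length w \<le> p + Suc j"
  shows "(map wbar [0..<m], map wbar [m..<p], x, map t [0..<j], t) \<in> Gamma k a \<and>
         prefix w (map wbar [0..<m] @ map wbar [m..<p] @ [x] @ map t [0..<j])"
proof -
  define w1 w2 g where "w1 = map wbar [0..<m]" and "w2 = map wbar [m..<p]" and "g = map t [0..<j]"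
  have "map wbar [p..<p + Suc j] = x # g"
    using occ by (simp add: factor_positions_def g_def)
  then have word: "w1 @ w2 @ [x] @ g = map wbar [0..<p + Suc j]"
    using map_upt_split[of 0 m "p + Suc j" wbar] map_upt_split[of m p "p + Suc j" wbar] \<open>m \<le> p\<close>
    by (simp del: upt_Suc add: w1_def w2_def)
  have L: "w1 @ w2 @ [x] @ g \<in> Lfin k a"
    using wbar unfolding word rext_inf_def by blast
  have "set g \<subseteq> Sigma k" using t by (auto simp: Linf_def g_def)
  moreover have "set w1 \<subseteq> Sigma k" "set w2 \<subseteq> Sigma k" using L by (auto simp: Lfin_def)
  moreover have "occur w2 [x] \<ge> occur w1 [x]"
    using count by (simp add: w1_def w2_def occur_single_map_upt atLeast0LessThan)
  moreover have "occur (w2 @ [x] @ g @ [t (length g)]) (x # g @ [t (length g)]) = 1"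
    using occur_unique_at_gap_end[OF occ gap \<open>m \<le> p\<close>] by (simp add: w2_def g_def)
  moreover have "inf_prefix g t" by (simp add: inf_prefix_def g_def)
  ultimately have "(w1, w2, x, g, t) \<in> Gamma k a"
    using L x t tx by (simp add: Gamma_def)
  moreover have "prefix w (w1 @ w2 @ [x] @ g)"
  proof -
    have "map wbar [0..<length w] = w" using wbar by (simp add: rext_inf_def inf_prefix_def)
    then show ?thesis
      using map_upt_split[of 0 "length w" "p + Suc j" wbar] long unfolding word by (simp del: upt_Suc)
  qed
  ultimately show ?thesis by (simp add: w1_def w2_def g_def)
qed

theorem mainTheorem6:
  fixes k :: nat and a :: pexp and w :: "nat list" and wbar t :: "nat \<Rightarrow> nat" and x :: nat
  assumes "(k, a) \<in> Upsilon"
    and "w \<in> rext (Lfin k a)"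
    and "wbar \<in> rext_inf w (Lfin k a)"
    and "x \<in> Sigma k"
    and "recurrent wbar [x]"
    and "t \<in> Linf k a"
    and "occur_inf t [x] = 0"
  shows "\<exists>w1 w2 g. (w1, w2, x, g, t) \<in> Gamma k a \<and> prefix w (w1 @ w2 @ [x] @ g)"
proof -
  define P where "P l = factor_positions wbar (x # map t [0..<l])" for l
  have "infinite (P 0)"
    using assms(5) by (simp add: P_def recurrent_iff_infinite_factor_positions)
  moreover have "P (Suc l) \<subseteq> P l" for l
    unfolding P_def by (rule factor_positions_prefix_subset) simp
  ultimately obtain j m p where "m \<le> p" "length w \<le> p + j" "p \<in> P j"
    "P (Suc j) \<inter> {m..<p} = {}" "card (P 0 \<inter> {..<m}) \<le> card (P 0 \<inter> {m..<p})"
    using decreasing_chain_gap[of P "length w"] by blast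
  then show ?thesis
    using Gamma_witness[OF assms(3,4,6,7), of m p j] unfolding P_def by auto
qed

end
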